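(* Let $G$ be a group with identity $1_G$ and inverse map $\pi:G\to G$, $\pi(g)=g^{-1}$. Suppose $B_1,B_2:G\to G$ are maps such that $(G,B_1,B_2)$ is a Rota-Baxter system of groups and $B_1(1_G)=B_2(1_G)=1_G$. Let $\widetilde{B_1},\widetilde{B_2}:\mathbb{F}[G]\to\mathbb{F}[G]$ be the unique linear maps extending $B_1$ and $\pi\circ B_2$ respectively, i.e. $\widetilde{B_1}(\sum\alpha_i g_i)=\sum\alpha_i B_1(g_i)$ and $\widetilde{B_2}(\sum\alpha_i g_i)=\sum \alpha_i B_2(g_i)^{-1}$. Then $(\mathbb{F}[G],\widetilde{B_1},\widetilde{B_2})$ is a Rota-Baxter system of Hopf algebras.
   Context: $\mathbb{F}$ is a field of characteristic $0$. $\mathbb{F}[G]$ is the group algebra with its standard Hopf algebra structure ($\Delta(g)=g\otimes g$, $\epsilon(g)=1$, $S(g)=g^{-1}$ for $g\in G$). A Rota-Baxter system of groups is a group $G$ with maps $B_1,B_2:G\to G$ such that for all $a,b\in G$: $B_1(a)B_1(b)=B_1(B_1(a)\,b\,B_2(a))$ and $B_2(b)B_2(a)=B_2(B_1(a)\,b\,B_2(a))$. Sweedler notation $\Delta(a)=a_1\otimes a_2$. A Rota-Baxter system of Hopf algebras is a triple $(H,B_1,B_2)$ where $(H,\cdot,1,\Delta,\epsilon,S)$ is a cocommutative Hopf algebra and $B_1,B_2:H\to H$ are coalgebra homomorphisms (i.e. $\Delta(B_i(a))=B_i(a_1)\otimes B_i(a_2)$, $\epsilon(B_i(a))=\epsilon(a)$)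 with $B_1(1)=B_2(1)=1$ such that for all $a,b\in H$: $B_1(a)B_1(b)=B_1(B_1(a_1)\,b\,S(B_2(a_2)))$ and $B_2(a)B_2(b)=B_2(B_1(a_1)\,b\,S(B_2(a_2)))$. *)

theory Defs
  imports "HOL-Algebra.Group" "HOL-Library.Poly_Mapping"
begin

definition rbs_group :: "('g, 'm) monoid_scheme \<Rightarrow> ('g \<Rightarrow> 'g) \<Rightarrow> ('g \<Rightarrow> 'g) \<Rightarrow> bool" where
  "rbs_group G B1 B2 \<longleftrightarrow> group G
     \<and> (\<forall>a \<in> carrier G. B1 a \<in> carrier G \<and> B2 a \<in> carrier G)
     \<and> (\<forall>a \<in> carrier G. \<forall>b \<in> carrier G.
          B1 a \<otimes>\<^bsub>G\<^esub> B1 b = B1 (B1 a \<otimes>\<^bsub>G\<^esub> b \<otimes>\<^bsub>G\<^esub> B2 a)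
        \<and> B2 b \<otimes>\<^bsub>G\<^esub> B2 a = B2 (B1 a \<otimes>\<^bsub>G\<^esub> b \<otimes>\<^bsub>G\<^esub> B2 a))"

text \<open>A vector space over the field 'f with basis indexed by 'b is modelled as
  'b =>0 'f.  The tensor product of the spaces with bases 'a and 'b is the space
  with basis 'a \<times> 'b (basis vector (g,h) = g \<otimes> h).\<close>

definition smult :: "'f::comm_ring_1 \<Rightarrow> ('a \<Rightarrow>\<^sub>0 'f) \<Rightarrow> ('a \<Rightarrow>\<^sub>0 'f)" where
  "smult c x = Poly_Mapping.map (\<lambda>v. c * v) x"

definition bas :: "'a \<Rightarrow> ('a \<Rightarrow>\<^sub>0 'f::comm_ring_1)" where
  "bas g = Poly_Mapping.single g 1"

definition lin_ext :: "('a \<Rightarrow> ('b \<Rightarrow>\<^sub>0 'f::comm_ring_1)) \<Rightarrow> ('a \<Rightarrow>\<^sub>0 'f) \<Rightarrow> ('b \<Rightarrow>\<^sub>0 'f)" where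
  "lin_ext F x = (\<Sum>p \<in> Poly_Mapping.keys x. smult (Poly_Mapping.lookup x p) (F p))"

definition tens :: "('a \<Rightarrow>\<^sub>0 'f::comm_ring_1) \<Rightarrow> ('b \<Rightarrow>\<^sub>0 'f) \<Rightarrow> ('a \<times> 'b \<Rightarrow>\<^sub>0 'f)" where
  "tens x y = lin_ext (\<lambda>g. lin_ext (\<lambda>h. bas (g, h)) y) x"

definition tmap :: "(('a \<Rightarrow>\<^sub>0 'f::comm_ring_1) \<Rightarrow> ('c \<Rightarrow>\<^sub>0 'f)) \<Rightarrow> (('b \<Rightarrow>\<^sub>0 'f) \<Rightarrow> ('d \<Rightarrow>\<^sub>0 'f))
    \<Rightarrow> ('a \<times> 'b \<Rightarrow>\<^sub>0 'f) \<Rightarrow> ('c \<times> 'd \<Rightarrow>\<^sub>0 'f)" where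
  "tmap f k t = lin_ext (\<lambda>(g, h). tens (f (bas g)) (k (bas h))) t"

definition tmult :: "(('b \<Rightarrow>\<^sub>0 'f::comm_ring_1) \<Rightarrow> ('b \<Rightarrow>\<^sub>0 'f) \<Rightarrow> ('b \<Rightarrow>\<^sub>0 'f))
    \<Rightarrow> ('b \<times> 'b \<Rightarrow>\<^sub>0 'f) \<Rightarrow> ('b \<times> 'b \<Rightarrow>\<^sub>0 'f) \<Rightarrow> ('b \<times> 'b \<Rightarrow>\<^sub>0 'f)" where
  "tmult m t u = lin_ext (\<lambda>(g, h). lin_ext (\<lambda>(g', h'). tens (m (bas g) (bas g')) (m (bas h) (bas h'))) u) t"

definition linear_on :: "('a \<Rightarrow>\<^sub>0 'f::comm_ring_1) set \<Rightarrow> (('a \<Rightarrow>\<^sub>0 'f) \<Rightarrow> ('c \<Rightarrow>\<^sub>0 'f)) \<Rightarrow> bool" where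
  "linear_on H f \<longleftrightarrow> (\<forall>x \<in> H. \<forall>y \<in> H. f (x + y) = f x + f y)
                     \<and> (\<forall>c. \<forall>x \<in> H. f (smult c x) = smult c (f x))"

definition cocomm_hopf ::
  "('b \<Rightarrow>\<^sub>0 'f::comm_ring_1) set
   \<Rightarrow> (('b \<Rightarrow>\<^sub>0 'f) \<Rightarrow> ('b \<Rightarrow>\<^sub>0 'f) \<Rightarrow> ('b \<Rightarrow>\<^sub>0 'f)) \<Rightarrow> ('b \<Rightarrow>\<^sub>0 'f)
   \<Rightarrow> (('b \<Rightarrow>\<^sub>0 'f) \<Rightarrow> ('b \<times> 'b \<Rightarrow>\<^sub>0 'f)) \<Rightarrow> (('b \<Rightarrow>\<^sub>0 'f) \<Rightarrow> 'f)
   \<Rightarrow> (('b \<Rightarrow>\<^sub>0 'f) \<Rightarrow> ('b \<Rightarrow>\<^sub>0 'f)) \<Rightarrow> bool" where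
  "cocomm_hopf H mu un comult counit S \<longleftrightarrow>
     \<comment> \<open>H is a subspace, closed under the operations\<close>
     0 \<in> H \<and> (\<forall>x \<in> H. \<forall>y \<in> H. x + y \<in> H) \<and> (\<forall>c. \<forall>x \<in> H. smult c x \<in> H)
   \<and> un \<in> H \<and> (\<forall>x \<in> H. \<forall>y \<in> H. mu x y \<in> H) \<and> (\<forall>x \<in> H. S x \<in> H)
     \<comment> \<open>linearity / bilinearity\<close>
   \<and> (\<forall>x \<in> H. linear_on H (mu x) \<and> linear_on H (\<lambda>y. mu y x))
   \<and> linear_on H comult \<and> linear_on H S
   \<and> (\<forall>x \<in> H. \<forall>y \<in> H. counit (x + y) = counit x + counit y)
   \<and> (\<forall>c. \<forall>x \<in> H. counit (smult c x) = c * counit x)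
     \<comment> \<open>associative unital algebra\<close>
   \<and> (\<forall>x \<in> H. \<forall>y \<in> H. \<forall>z \<in> H. mu (mu x y) z = mu x (mu y z))
   \<and> (\<forall>x \<in> H. mu un x = x \<and> mu x un = x)
     \<comment> \<open>coassociative counital coalgebra\<close>
   \<and> (\<forall>x \<in> H. lin_ext (\<lambda>((a, b), c). bas (a, (b, c))) (tmap comult id (comult x))
              = tmap id comult (comult x))
   \<and> (\<forall>x \<in> H. lin_ext (\<lambda>(g, h). smult (counit (bas g)) (bas h)) (comult x) = x
            \<and> lin_ext (\<lambda>(g, h). smult (counit (bas h)) (bas g)) (comult x) = x)
     \<comment> \<open>comultiplication and counit are algebra homomorphisms\<close>
   \<and> (\<forall>x \<in> H. \<forall>y \<in> H. comult (mu x y) = tmult mu (comult x) (comult y))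
   \<and> comult un = tens un un
   \<and> (\<forall>x \<in> H. \<forall>y \<in> H. counit (mu x y) = counit x * counit y)
   \<and> counit un = 1
     \<comment> \<open>antipode\<close>
   \<and> (\<forall>x \<in> H. lin_ext (\<lambda>(g, h). mu (S (bas g)) (bas h)) (comult x) = smult (counit x) un
            \<and> lin_ext (\<lambda>(g, h). mu (bas g) (S (bas h))) (comult x) = smult (counit x) un)
     \<comment> \<open>cocommutativity\<close>
   \<and> (\<forall>x \<in> H. lin_ext (\<lambda>(g, h). bas (h, g)) (comult x) = comult x)"

text \<open>In Sweedler notation, rb_arg a b = B1(a_1) b S(B2(a_2)).\<close>
definition rb_arg ::
  "(('b \<Rightarrow>\<^sub>0 'f::comm_ring_1) \<Rightarrow> ('b \<Rightarrow>\<^sub>0 'f) \<Rightarrow> ('b \<Rightarrow>\<^sub>0 'f))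
   \<Rightarrow> (('b \<Rightarrow>\<^sub>0 'f) \<Rightarrow> ('b \<times> 'b \<Rightarrow>\<^sub>0 'f)) \<Rightarrow> (('b \<Rightarrow>\<^sub>0 'f) \<Rightarrow> ('b \<Rightarrow>\<^sub>0 'f))
   \<Rightarrow> (('b \<Rightarrow>\<^sub>0 'f) \<Rightarrow> ('b \<Rightarrow>\<^sub>0 'f)) \<Rightarrow> (('b \<Rightarrow>\<^sub>0 'f) \<Rightarrow> ('b \<Rightarrow>\<^sub>0 'f))
   \<Rightarrow> ('b \<Rightarrow>\<^sub>0 'f) \<Rightarrow> ('b \<Rightarrow>\<^sub>0 'f) \<Rightarrow> ('b \<Rightarrow>\<^sub>0 'f)" where
  "rb_arg mu comult S B1 B2 a b =
     lin_ext (\<lambda>(g, h). mu (mu (B1 (bas g)) b) (S (B2 (bas h)))) (comult a)"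

definition coalg_hom_on ::
  "('b \<Rightarrow>\<^sub>0 'f::comm_ring_1) set \<Rightarrow> (('b \<Rightarrow>\<^sub>0 'f) \<Rightarrow> ('b \<times> 'b \<Rightarrow>\<^sub>0 'f)) \<Rightarrow> (('b \<Rightarrow>\<^sub>0 'f) \<Rightarrow> 'f)
   \<Rightarrow> (('b \<Rightarrow>\<^sub>0 'f) \<Rightarrow> ('b \<Rightarrow>\<^sub>0 'f)) \<Rightarrow> bool" where
  "coalg_hom_on H comult counit B \<longleftrightarrow>
     linear_on H B \<and> (\<forall>a \<in> H. B a \<in> H)
   \<and> (\<forall>a \<in> H. comult (B a) = tmap B B (comult a))
   \<and> (\<forall>a \<in> H. counit (B a) = counit a)"

definition rbs_hopf ::
  "('b \<Rightarrow>\<^sub>0 'f::comm_ring_1) set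
   \<Rightarrow> (('b \<Rightarrow>\<^sub>0 'f) \<Rightarrow> ('b \<Rightarrow>\<^sub>0 'f) \<Rightarrow> ('b \<Rightarrow>\<^sub>0 'f)) \<Rightarrow> ('b \<Rightarrow>\<^sub>0 'f)
   \<Rightarrow> (('b \<Rightarrow>\<^sub>0 'f) \<Rightarrow> ('b \<times> 'b \<Rightarrow>\<^sub>0 'f)) \<Rightarrow> (('b \<Rightarrow>\<^sub>0 'f) \<Rightarrow> 'f)
   \<Rightarrow> (('b \<Rightarrow>\<^sub>0 'f) \<Rightarrow> ('b \<Rightarrow>\<^sub>0 'f))
   \<Rightarrow> (('b \<Rightarrow>\<^sub>0 'f) \<Rightarrow> ('b \<Rightarrow>\<^sub>0 'f)) \<Rightarrow> (('b \<Rightarrow>\<^sub>0 'f) \<Rightarrow> ('b \<Rightarrow>\<^sub>0 'f)) \<Rightarrow> bool" where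
  "rbs_hopf H mu un comult counit S B1 B2 \<longleftrightarrow>
     cocomm_hopf H mu un comult counit S
   \<and> coalg_hom_on H comult counit B1 \<and> coalg_hom_on H comult counit B2
   \<and> B1 un = un \<and> B2 un = un
   \<and> (\<forall>a \<in> H. \<forall>b \<in> H.
        mu (B1 a) (B1 b) = B1 (rb_arg mu comult S B1 B2 a b)
      \<and> mu (B2 a) (B2 b) = B2 (rb_arg mu comult S B1 B2 a b))"

definition ga :: "('g, 'm) monoid_scheme \<Rightarrow> ('g \<Rightarrow>\<^sub>0 'f::comm_ring_1) set" where
  "ga G = {x. Poly_Mapping.keys x \<subseteq> carrier G}"

definition ga_mult :: "('g, 'm) monoid_scheme \<Rightarrow> ('g \<Rightarrow>\<^sub>0 'f::comm_ring_1) \<Rightarrow> ('g \<Rightarrow>\<^sub>0 'f) \<Rightarrow> ('g \<Rightarrow>\<^sub>0 'f)" where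
  "ga_mult G x y = lin_ext (\<lambda>(g, h). bas (g \<otimes>\<^bsub>G\<^esub> h)) (tens x y)"

definition ga_one :: "('g, 'm) monoid_scheme \<Rightarrow> ('g \<Rightarrow>\<^sub>0 'f::comm_ring_1)" where
  "ga_one G = bas \<one>\<^bsub>G\<^esub>"

definition ga_comult :: "('g \<Rightarrow>\<^sub>0 'f::comm_ring_1) \<Rightarrow> ('g \<times> 'g \<Rightarrow>\<^sub>0 'f)" where
  "ga_comult x = lin_ext (\<lambda>g. bas (g, g)) x"

definition ga_counit :: "('g \<Rightarrow>\<^sub>0 'f::comm_ring_1) \<Rightarrow> 'f" where
  "ga_counit x = (\<Sum>g \<in> Poly_Mapping.keys x. Poly_Mapping.lookup x g)"

definition ga_antipode :: "('g, 'm) monoid_scheme \<Rightarrow> ('g \<Rightarrow>\<^sub>0 'f::comm_ring_1) \<Rightarrow> ('g \<Rightarrow>\<^sub>0 'f)" where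
  "ga_antipode G x = lin_ext (\<lambda>g. bas (inv\<^bsub>G\<^esub> g)) x"

end

theory Submission
  imports Defs
begin

(* All structure maps of F[G], as well as the two maps extending B1 and inv o B2, are linear
   extensions of maps on G, and group elements are group-like (Delta g = g \<otimes> g). Hence every
   Hopf algebra axiom and both Rota-Baxter identities are (bi)linear and reduce to identities
   between basis elements g, h of G. On basis elements B1(g_1) h S(B2(g_2)) becomes
   B1(g) h B2(g), because the antipode undoes the inversion built into the second map; the first
   identity is then the one assumed for B1 on G, and the second is the inverse of
   B2(h) B2(g) = B2(B1(g) h B2(g)). *)

lemma lookup_smult: "Poly_Mapping.lookup (smult c x) k = c * Poly_Mapping.lookup x k"
  by (simp add: smult_def map.rep_eq when_def)

lemma smult_add_right: "smult c (x + y) = smult c x + smult c y"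
  by (rule poly_mapping_eqI) (simp add: lookup_smult lookup_add algebra_simps)

lemma smult_add_left: "smult (c + d) x = smult c x + smult d x"
  by (rule poly_mapping_eqI) (simp add: lookup_smult lookup_add algebra_simps)

lemma smult_smult: "smult c (smult d x) = smult (c * d) x"
  by (rule poly_mapping_eqI) (simp add: lookup_smult algebra_simps)

lemma smult_one [simp]: "smult 1 x = x"
  by (rule poly_mapping_eqI) (simp add: lookup_smult)

lemma smult_zero_left [simp]: "smult 0 x = 0"
  by (rule poly_mapping_eqI) (simp add: lookup_smult)

lemma smult_sum_right: "smult c (sum f A) = (\<Sum>i\<in>A. smult c (f i))"
  by (rule poly_mapping_eqI) (simp add: lookup_smult lookup_sum sum_distrib_left)

lemma smult_sum_left: "smult (sum f A) x = (\<Sum>i\<in>A. smult (f i) x)"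
  by (rule poly_mapping_eqI) (simp add: lookup_smult lookup_sum sum_distrib_right)

lemma keys_smult: "Poly_Mapping.keys (smult c x) \<subseteq> Poly_Mapping.keys x"
  by (auto simp: in_keys_iff lookup_smult)

lemma lin_ext_superset:
  assumes "finite S" "Poly_Mapping.keys x \<subseteq> S"
  shows "lin_ext F x = (\<Sum>p\<in>S. smult (Poly_Mapping.lookup x p) (F p))"
  unfolding lin_ext_def
  by (rule sum.mono_neutral_left) (use assms in \<open>auto simp: in_keys_iff\<close>)

lemma lin_ext_add [simp]: "lin_ext F (x + y) = lin_ext F x + lin_ext F y"
proof -
  let ?S = "Poly_Mapping.keys x \<union> Poly_Mapping.keys y"
  have S: "finite ?S" by simp
  have "lin_ext F (x + y) = (\<Sum>p\<in>?S. smult (Poly_Mapping.lookup (x + y) p) (F p))"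
    by (rule lin_ext_superset[OF S]) (use keys_add[of x y] in auto)
  also have "\<dots> = (\<Sum>p\<in>?S. smult (Poly_Mapping.lookup x p) (F p))
                  + (\<Sum>p\<in>?S. smult (Poly_Mapping.lookup y p) (F p))"
    by (simp add: lookup_add smult_add_left sum.distrib)
  also have "\<dots> = lin_ext F x + lin_ext F y"
    by (simp add: lin_ext_superset[OF S])
  finally show ?thesis .
qed

lemma lin_ext_smult [simp]: "lin_ext F (smult c x) = smult c (lin_ext F x)"
proof -
  have "lin_ext F (smult c x)
        = (\<Sum>p\<in>Poly_Mapping.keys x. smult (Poly_Mapping.lookup (smult c x) p) (F p))"
    by (rule lin_ext_superset) (use keys_smult[of c x] in auto)
  also have "\<dots> = smult c (lin_ext F x)"
    by (simp add: lin_ext_def smult_sum_right lookup_smult smult_smult)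
  finally show ?thesis .
qed

lemma lin_ext_zero [simp]: "lin_ext F 0 = 0"
  by (simp add: lin_ext_def)

lemma lin_ext_sum: "lin_ext F (sum g A) = (\<Sum>i\<in>A. lin_ext F (g i))"
  by (induction A rule: infinite_finite_induct) auto

lemma lin_ext_lin_ext [simp]: "lin_ext F (lin_ext G x) = lin_ext (\<lambda>p. lin_ext F (G p)) x"
  by (simp add: lin_ext_def[of G x] lin_ext_sum) (simp add: lin_ext_def)

lemma lin_ext_bas [simp]: "lin_ext F (bas g :: 'a \<Rightarrow>\<^sub>0 'f::comm_ring_1) = F g"
  by (simp add: lin_ext_def bas_def)

lemma lin_ext_fun_add [simp]: "lin_ext (\<lambda>p. F p + F' p) x = lin_ext F x + lin_ext F' x"
  by (simp add: lin_ext_def smult_add_right sum.distrib)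

lemma lin_ext_fun_smult [simp]: "lin_ext (\<lambda>p. smult c (F p)) x = smult c (lin_ext F x)"
  by (simp add: lin_ext_def smult_sum_right smult_smult mult.commute)

lemma lin_ext_bas_id [simp]: "lin_ext bas x = x"
proof (rule poly_mapping_eqI)
  fix k
  have "Poly_Mapping.lookup (lin_ext bas x) k
        = (\<Sum>p\<in>Poly_Mapping.keys x. if p = k then Poly_Mapping.lookup x p else 0)"
    unfolding lin_ext_def bas_def lookup_sum lookup_smult lookup_single when_def
    by (rule sum.cong) auto
  also have "\<dots> = Poly_Mapping.lookup x k"
    by (simp add: sum.delta' in_keys_iff)
  finally show "Poly_Mapping.lookup (lin_ext bas x) k = Poly_Mapping.lookup x k" .
qed

lemma lin_ext_cong:
  assumes "Poly_Mapping.keys x \<subseteq> A" "\<And>g. g \<in> A \<Longrightarrow> F g = F' g"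
  shows "lin_ext F x = lin_ext F' x"
  unfolding lin_ext_def using assms by (intro sum.cong) auto

lemma keys_lin_ext:
  "Poly_Mapping.keys (lin_ext F x) \<subseteq> (\<Union>p\<in>Poly_Mapping.keys x. Poly_Mapping.keys (F p))"
  unfolding lin_ext_def using keys_sum keys_smult by fastforce

lemma ga_counit_superset:
  assumes "finite S" "Poly_Mapping.keys x \<subseteq> S"
  shows "ga_counit x = (\<Sum>p\<in>S. Poly_Mapping.lookup x p)"
  unfolding ga_counit_def
  by (rule sum.mono_neutral_left) (use assms in \<open>auto simp: in_keys_iff\<close>)

lemma ga_counit_add: "ga_counit (x + y) = ga_counit x + ga_counit y"
  using keys_add[of x y]
  by (simp add: ga_counit_superset[of "Poly_Mapping.keys x \<union> Poly_Mapping.keys y"]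
      lookup_add sum.distrib)

lemma ga_counit_smult: "ga_counit (smult c x) = c * ga_counit x"
  using keys_smult[of c x]
  by (simp add: ga_counit_superset[of "Poly_Mapping.keys x"] lookup_smult sum_distrib_left)

lemma ga_counit_zero [simp]: "ga_counit 0 = 0"
  by (simp add: ga_counit_def)

lemma ga_counit_sum: "ga_counit (sum g A) = (\<Sum>i\<in>A. ga_counit (g i))"
  by (induction A rule: infinite_finite_induct) (auto simp: ga_counit_add)

lemma ga_counit_bas [simp]: "ga_counit (bas g :: 'a \<Rightarrow>\<^sub>0 'f::comm_ring_1) = 1"
  by (simp add: ga_counit_def bas_def)

lemma ga_counit_lin_ext_const:
  assumes "\<And>g. ga_counit (F g) = c"
  shows "ga_counit (lin_ext F x) = ga_counit x * c"
proof -
  have "ga_counit (lin_ext F x) = (\<Sum>p\<in>Poly_Mapping.keys x. Poly_Mapping.lookup x p * c)"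
    by (simp add: lin_ext_def ga_counit_sum ga_counit_smult assms)
  then show ?thesis
    by (simp add: ga_counit_def sum_distrib_right)
qed

lemma smult_ga_counit: "smult (ga_counit x) y = lin_ext (\<lambda>_. y) x"
  by (simp add: ga_counit_def lin_ext_def smult_sum_left)

lemma ga_mult_eq: "ga_mult G x y = lin_ext (\<lambda>g. lin_ext (\<lambda>h. bas (g \<otimes>\<^bsub>G\<^esub> h)) y) x"
  by (simp add: ga_mult_def tens_def)

lemma lin_ext_in_ga:
  "x \<in> ga G \<Longrightarrow> (\<And>g. g \<in> carrier G \<Longrightarrow> F g \<in> ga G) \<Longrightarrow> lin_ext F x \<in> ga G"
  using keys_lin_ext[of F x] unfolding ga_def by blast

lemma bas_in_ga: "g \<in> carrier G \<Longrightarrow> (bas g :: _ \<Rightarrow>\<^sub>0 'f::comm_ring_1) \<in> ga G"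
  by (simp add: ga_def bas_def)

lemma zero_in_ga: "0 \<in> ga G"
  by (simp add: ga_def)

lemma add_in_ga: "x \<in> ga G \<Longrightarrow> y \<in> ga G \<Longrightarrow> x + y \<in> ga G"
  using keys_add[of x y] unfolding ga_def by blast

lemma smult_in_ga: "x \<in> ga G \<Longrightarrow> smult c x \<in> ga G"
  using keys_smult[of c x] unfolding ga_def by blast

lemma lin_ext_cong_ga:
  "x \<in> ga G \<Longrightarrow> (\<And>g. g \<in> carrier G \<Longrightarrow> F g = F' g) \<Longrightarrow> lin_ext F x = lin_ext F' x"
  by (rule lin_ext_cong[of x "carrier G"]) (auto simp: ga_def)

lemma ga_mult_in_ga:
  "monoid G \<Longrightarrow> x \<in> ga G \<Longrightarrow> y \<in> ga G \<Longrightarrow> ga_mult G x y \<in> ga G"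
  unfolding ga_mult_eq by (intro lin_ext_in_ga bas_in_ga monoid.m_closed) auto

lemma ga_mult_assoc:
  assumes "monoid G" "x \<in> ga G" "y \<in> ga G" "z \<in> ga G"
  shows "ga_mult G (ga_mult G x y) z = ga_mult G x (ga_mult G y z)"
  using assms by (auto simp: ga_mult_eq monoid.m_assoc intro!: lin_ext_cong_ga)

lemma ga_mult_one_left: "monoid G \<Longrightarrow> x \<in> ga G \<Longrightarrow> ga_mult G (ga_one G) x = x"
  by (auto simp: ga_mult_eq ga_one_def intro: lin_ext_cong_ga[where F' = bas, simplified])

lemma ga_mult_one_right: "monoid G \<Longrightarrow> x \<in> ga G \<Longrightarrow> ga_mult G x (ga_one G) = x"
  by (auto simp: ga_mult_eq ga_one_def intro: lin_ext_cong_ga[where F' = bas, simplified])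

lemma ga_comult_coassoc:
  "lin_ext (\<lambda>((a, b), c). bas (a, (b, c))) (tmap ga_comult id (ga_comult x))
     = tmap id ga_comult (ga_comult x)"
  by (simp add: ga_comult_def tmap_def tens_def)

lemma ga_comult_counit_left:
  "lin_ext (\<lambda>(g, h). smult (ga_counit (bas g)) (bas h)) (ga_comult x) = x"
  by (simp add: ga_comult_def)

lemma ga_comult_counit_right:
  "lin_ext (\<lambda>(g, h). smult (ga_counit (bas h)) (bas g)) (ga_comult x) = x"
  by (simp add: ga_comult_def)

lemma ga_comult_mult: "ga_comult (ga_mult G x y) = tmult (ga_mult G) (ga_comult x) (ga_comult y)"
  by (simp add: ga_comult_def ga_mult_eq tmult_def tens_def)

lemma ga_one_in_ga: "monoid G \<Longrightarrow> ga_one G \<in> ga G"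
  by (simp add: ga_one_def bas_in_ga monoid.one_closed)

lemma ga_comult_one: "ga_comult (ga_one G) = tens (ga_one G) (ga_one G)"
  by (simp add: ga_comult_def ga_one_def tens_def)

lemma ga_counit_one: "ga_counit (ga_one G) = 1"
  by (simp add: ga_one_def)

lemma ga_counit_mult: "ga_counit (ga_mult G x y) = ga_counit x * ga_counit y"
  unfolding ga_mult_eq
  by (intro ga_counit_lin_ext_const) (simp add: ga_counit_lin_ext_const)

lemma ga_antipode_in_ga: "group G \<Longrightarrow> x \<in> ga G \<Longrightarrow> ga_antipode G x \<in> ga G"
  unfolding ga_antipode_def by (intro lin_ext_in_ga bas_in_ga group.inv_closed) auto

lemma ga_antipode_left:
  assumes "group G" "x \<in> ga G"
  shows "lin_ext (\<lambda>(g, h). ga_mult G (ga_antipode G (bas g)) (bas h)) (ga_comult x)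
           = smult (ga_counit x) (ga_one G)"
  using assms
  by (auto simp: ga_comult_def ga_antipode_def ga_mult_eq ga_one_def smult_ga_counit
      group.l_inv intro!: lin_ext_cong_ga)

lemma ga_antipode_right:
  assumes "group G" "x \<in> ga G"
  shows "lin_ext (\<lambda>(g, h). ga_mult G (bas g) (ga_antipode G (bas h))) (ga_comult x)
           = smult (ga_counit x) (ga_one G)"
  using assms
  by (auto simp: ga_comult_def ga_antipode_def ga_mult_eq ga_one_def smult_ga_counit
      group.r_inv intro!: lin_ext_cong_ga)

lemma ga_comult_cocomm: "lin_ext (\<lambda>(g, h). bas (h, g)) (ga_comult x) = ga_comult x"
  by (simp add: ga_comult_def)

lemma cocomm_hopf_ga:
  assumes "group G"
  shows "cocomm_hopf (ga G) (ga_mult G) (ga_one G) ga_comult ga_counit (ga_antipode G)"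
proof -
  interpret group G by fact
  have linear:
    "linear_on (ga G) ga_comult" "linear_on (ga G) (ga_antipode G)"
    "\<And>x. linear_on (ga G) (ga_mult G x)" "\<And>x. linear_on (ga G) (\<lambda>y. ga_mult G y x)"
    by (simp_all add: linear_on_def ga_comult_def ga_antipode_def ga_mult_eq)
  show ?thesis
    unfolding cocomm_hopf_def
    by (simp add: assms linear zero_in_ga add_in_ga smult_in_ga ga_one_in_ga ga_mult_in_ga
        ga_antipode_in_ga ga_counit_add ga_counit_smult ga_mult_assoc ga_mult_one_left
        ga_mult_one_right ga_comult_coassoc ga_comult_counit_left ga_comult_counit_right
        ga_comult_mult ga_comult_one ga_counit_mult ga_counit_one ga_antipode_left
        ga_antipode_right ga_comult_cocomm del: ga_counit_bas)
qed

lemma coalg_hom_on_lin_ext_bas: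
  assumes "\<And>g. g \<in> carrier G \<Longrightarrow> f g \<in> carrier G"
  shows "coalg_hom_on (ga G) ga_comult ga_counit (lin_ext (\<lambda>g. bas (f g)))"
  unfolding coalg_hom_on_def linear_on_def
  using assms
  by (auto simp: ga_comult_def tmap_def tens_def ga_counit_lin_ext_const
      intro!: lin_ext_in_ga bas_in_ga)

lemma rb_arg_lin_ext_bas:
  "rb_arg (ga_mult G) ga_comult (ga_antipode G)
       (lin_ext (\<lambda>g. bas (f1 g))) (lin_ext (\<lambda>g. bas (f2 g))) x y
     = lin_ext (\<lambda>g. lin_ext (\<lambda>h. bas (f1 g \<otimes>\<^bsub>G\<^esub> h \<otimes>\<^bsub>G\<^esub> inv\<^bsub>G\<^esub> f2 g)) y) x"
  by (simp add: rb_arg_def ga_comult_def ga_antipode_def ga_mult_eq)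

lemma rbs_hopf_ga_lin_ext_bas:
  assumes "group G"
    and closed1: "\<And>g. g \<in> carrier G \<Longrightarrow> f1 g \<in> carrier G"
    and closed2: "\<And>g. g \<in> carrier G \<Longrightarrow> f2 g \<in> carrier G"
    and "f1 \<one>\<^bsub>G\<^esub> = \<one>\<^bsub>G\<^esub>" "f2 \<one>\<^bsub>G\<^esub> = \<one>\<^bsub>G\<^esub>"
    and rb1: "\<And>g h. g \<in> carrier G \<Longrightarrow> h \<in> carrier G \<Longrightarrow>
      f1 g \<otimes>\<^bsub>G\<^esub> f1 h = f1 (f1 g \<otimes>\<^bsub>G\<^esub> h \<otimes>\<^bsub>G\<^esub> inv\<^bsub>G\<^esub> f2 g)"
    and rb2: "\<And>g h. g \<in> carrier G \<Longrightarrow> h \<in> carrier G \<Longrightarrow>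
      f2 g \<otimes>\<^bsub>G\<^esub> f2 h = f2 (f1 g \<otimes>\<^bsub>G\<^esub> h \<otimes>\<^bsub>G\<^esub> inv\<^bsub>G\<^esub> f2 g)"
  shows "rbs_hopf (ga G) (ga_mult G) (ga_one G) ga_comult ga_counit (ga_antipode G)
           (lin_ext (\<lambda>g. bas (f1 g))) (lin_ext (\<lambda>g. bas (f2 g)))"
proof -
  have unit: "lin_ext (\<lambda>g. bas (f1 g)) (ga_one G) = ga_one G"
    "lin_ext (\<lambda>g. bas (f2 g)) (ga_one G) = ga_one G"
    using assms by (simp_all add: ga_one_def)
  have rb_identities:
    "ga_mult G (lin_ext (\<lambda>g. bas (f1 g)) x) (lin_ext (\<lambda>g. bas (f1 g)) y)
          = lin_ext (\<lambda>g. bas (f1 g)) (rb_arg (ga_mult G) ga_comult (ga_antipode G)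
              (lin_ext (\<lambda>g. bas (f1 g))) (lin_ext (\<lambda>g. bas (f2 g))) x y)"
       "ga_mult G (lin_ext (\<lambda>g. bas (f2 g)) x) (lin_ext (\<lambda>g. bas (f2 g)) y)
          = lin_ext (\<lambda>g. bas (f2 g)) (rb_arg (ga_mult G) ga_comult (ga_antipode G)
              (lin_ext (\<lambda>g. bas (f1 g))) (lin_ext (\<lambda>g. bas (f2 g))) x y)"
    if "x \<in> ga G" "y \<in> ga G" for x y
    unfolding rb_arg_lin_ext_bas ga_mult_eq
    using that by (auto simp: rb1 rb2 intro!: lin_ext_cong_ga)
  show ?thesis
    unfolding rbs_hopf_def
    by (simp add: rb_identities unit cocomm_hopf_ga \<open>group G\<close> coalg_hom_on_lin_ext_bas
        closed1 closed2)
qed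

theorem mainTheorem2:
  fixes G :: "('g, 'm) monoid_scheme" and B1 B2 :: "'g \<Rightarrow> 'g"
  assumes "group G"
    and "rbs_group G B1 B2"
    and "B1 \<one>\<^bsub>G\<^esub> = \<one>\<^bsub>G\<^esub>" and "B2 \<one>\<^bsub>G\<^esub> = \<one>\<^bsub>G\<^esub>"
  shows "rbs_hopf (ga G :: ('g \<Rightarrow>\<^sub>0 'f::field_char_0) set)
           (ga_mult G) (ga_one G) ga_comult ga_counit (ga_antipode G)
           (lin_ext (\<lambda>g. bas (B1 g)))
           (lin_ext (\<lambda>g. bas (inv\<^bsub>G\<^esub> (B2 g))))"
proof -
  interpret group G by fact
  have closed: "\<And>g. g \<in> carrier G \<Longrightarrow> B1 g \<in> carrier G"
      "\<And>g. g \<in> carrier G \<Longrightarrow> B2 g \<in> carrier G"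
    and rb1: "\<And>g h. g \<in> carrier G \<Longrightarrow> h \<in> carrier G \<Longrightarrow>
      B1 g \<otimes>\<^bsub>G\<^esub> B1 h = B1 (B1 g \<otimes>\<^bsub>G\<^esub> h \<otimes>\<^bsub>G\<^esub> B2 g)"
    and rb2: "\<And>g h. g \<in> carrier G \<Longrightarrow> h \<in> carrier G \<Longrightarrow>
      B2 h \<otimes>\<^bsub>G\<^esub> B2 g = B2 (B1 g \<otimes>\<^bsub>G\<^esub> h \<otimes>\<^bsub>G\<^esub> B2 g)"
    using assms(2) unfolding rbs_group_def by auto
  have rb2_inv: "inv\<^bsub>G\<^esub> B2 g \<otimes>\<^bsub>G\<^esub> inv\<^bsub>G\<^esub> B2 h
      = inv\<^bsub>G\<^esub> B2 (B1 g \<otimes>\<^bsub>G\<^esub> h \<otimes>\<^bsub>G\<^esub> B2 g)"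
    if "g \<in> carrier G" "h \<in> carrier G" for g h
    using that closed by (metis inv_mult_group rb2)
  show ?thesis
    using closed rb1 rb2_inv assms(3,4)
    by (intro rbs_hopf_ga_lin_ext_bas) auto
qed

end
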